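(* Let $\mathcal{A}$ and $\mathcal{B}$ be nice GFG-tNCWs with $L(\mathcal{A})=L(\mathcal{B})$, each minimal (i.e., no GFG-tNCW recognizing the same language has fewer states). Then $\mathcal{A}$ and $\mathcal{B}$ are safe isomorphic.
   Context: A tNCW is $\mathcal{A}=\langle\Sigma,Q,q_0,\delta,\alpha\rangle$: finite alphabet $\Sigma$, finite state set $Q$, initial state $q_0$, transition function $\delta:Q\times\Sigma\to 2^Q\setminus\{\emptyset\}$ with transition relation $\Delta=\{\langle q,\sigma,s\rangle:s\in\delta(q,\sigma)\}$, and $\alpha\subseteq\Delta$; $|\mathcal{A}|=|Q|$. $\alpha$-transitions are those in $\alpha$, $\bar\alpha$-transitions those in $\Delta\setminus\alpha$; $\delta^{\alpha}(q,\sigma)$ and $\delta^{\bar\alpha}(q,\sigma)$ are the sets of $\sigma$-successors of $q$ via $\alpha$-, resp. $\bar\alpha$-transitions. A run on $w=\sigma_1\sigma_2\cdots$ is $r_0r_1\cdots$ with $r_0=q_0$, $r_{i+1}\in\delta(r_i,\sigma_{i+1})$; it is accepting iff it traverses $\alpha$-transitions only finitely often; $L(\mathcal{A})$ is the accepted language. $\mathcal{A}^q$ is $\mathcal{A}$ with initial state $q$; $q\sim s$ iff $L(\mathcal{A}^q)=L(\mathcal{A}^s)$. $\mathcal{A}$ is GFG if there is $f:\Sigma^*\to Q$ with $f(\epsilon)=q_0$, $\langle f(u),\sigma,f(u\sigma)\rangle\in\Delta$ for all $u,\sigma$, and for every $w\in L(\mathcal{A})$ the run $f(w[1,0]),f(w[1,1]),\dots$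 is accepting; state $q$ is GFG if $\mathcal{A}^q$ is. $\mathcal{A}$ is semantically deterministic if all $\sigma$-successors of any state are pairwise $\sim$-equivalent; safe deterministic if $|\delta^{\bar\alpha}(q,\sigma)|\le1$ always; normal if whenever a path of $\bar\alpha$-transitions leads from $q$ to $s$, one also leads from $s$ to $q$. $\mathcal{A}$ is nice if all states are reachable and GFG and $\mathcal{A}$ is normal, safe deterministic and semantically deterministic. For tNCWs $\mathcal{A},\mathcal{B}$ over the same alphabet with state sets $Q_\mathcal{A},Q_\mathcal{B}$, a bijection $\kappa:Q_\mathcal{A}\to Q_\mathcal{B}$ is $\bar\alpha$-transition respecting if for all $q,q'\in Q_\mathcal{A}$ and $\sigma\in\Sigma$: $q'\in\delta^{\bar\alpha}_\mathcal{A}(q,\sigma)$ iff $\kappa(q')\in\delta^{\bar\alpha}_\mathcal{B}(\kappa(q),\sigma)$. $\mathcal{A}$ and $\mathcal{B}$ are safe isomorphic if such a bijection exists. *)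

theory Defs
  imports Main
begin

record ('q, 's) tNCW =
  alph :: "'s set"
  states :: "'q set"
  init :: 'q
  trans :: "'q \<Rightarrow> 's \<Rightarrow> 'q set"
  acc :: "('q \<times> 's \<times> 'q) set"

definition Delta :: "('q, 's) tNCW \<Rightarrow> ('q \<times> 's \<times> 'q) set" where
  "Delta A = {(q, \<sigma>, s). q \<in> states A \<and> \<sigma> \<in> alph A \<and> s \<in> trans A q \<sigma>}"

definition wf_tNCW :: "('q, 's) tNCW \<Rightarrow> bool" where
  "wf_tNCW A \<longleftrightarrow> finite (alph A) \<and> finite (states A) \<and> init A \<in> states A \<and>
     (\<forall>q\<in>states A. \<forall>\<sigma>\<in>alph A. trans A q \<sigma> \<noteq> {} \<and> trans A q \<sigma> \<subseteq> states A) \<and>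
     acc A \<subseteq> Delta A"

text \<open>Infinite words are functions nat => letter; letter w i is sigma_(i+1).\<close>
definition is_word :: "('q, 's) tNCW \<Rightarrow> (nat \<Rightarrow> 's) \<Rightarrow> bool" where
  "is_word A w \<longleftrightarrow> (\<forall>i. w i \<in> alph A)"

definition is_run :: "('q, 's) tNCW \<Rightarrow> 'q \<Rightarrow> (nat \<Rightarrow> 's) \<Rightarrow> (nat \<Rightarrow> 'q) \<Rightarrow> bool" where
  "is_run A q w r \<longleftrightarrow> r 0 = q \<and> (\<forall>i. r (Suc i) \<in> trans A (r i) (w i))"

definition accepting :: "('q, 's) tNCW \<Rightarrow> (nat \<Rightarrow> 's) \<Rightarrow> (nat \<Rightarrow> 'q) \<Rightarrow> bool" where
  "accepting A w r \<longleftrightarrow> finite {i. (r i, w i, r (Suc i)) \<in> acc A}"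

definition lang_from :: "('q, 's) tNCW \<Rightarrow> 'q \<Rightarrow> (nat \<Rightarrow> 's) set" where
  "lang_from A q = {w. is_word A w \<and> (\<exists>r. is_run A q w r \<and> accepting A w r)}"

definition lang :: "('q, 's) tNCW \<Rightarrow> (nat \<Rightarrow> 's) set" where
  "lang A = lang_from A (init A)"

definition prefix :: "(nat \<Rightarrow> 's) \<Rightarrow> nat \<Rightarrow> 's list" where
  "prefix w i = map w [0..<i]"

definition GFG_state :: "('q, 's) tNCW \<Rightarrow> 'q \<Rightarrow> bool" where
  "GFG_state A q \<longleftrightarrow> (\<exists>f :: 's list \<Rightarrow> 'q. f [] = q \<and>
     (\<forall>u \<sigma>. set u \<subseteq> alph A \<and> \<sigma> \<in> alph A \<longrightarrow> (f u, \<sigma>, f (u @ [\<sigma>])) \<in> Delta A) \<and>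
     (\<forall>w \<in> lang_from A q. finite {i. (f (prefix w i), w i, f (prefix w (Suc i))) \<in> acc A}))"

definition GFG :: "('q, 's) tNCW \<Rightarrow> bool" where
  "GFG A \<longleftrightarrow> GFG_state A (init A)"

definition GFG_tNCW :: "('q, 's) tNCW \<Rightarrow> bool" where
  "GFG_tNCW A \<longleftrightarrow> wf_tNCW A \<and> GFG A"

definition delta_safe :: "('q, 's) tNCW \<Rightarrow> 'q \<Rightarrow> 's \<Rightarrow> 'q set" where
  "delta_safe A q \<sigma> = {s \<in> trans A q \<sigma>. (q, \<sigma>, s) \<notin> acc A}"

definition safe_edges :: "('q, 's) tNCW \<Rightarrow> ('q \<times> 'q) set" where
  "safe_edges A = {(q, s). q \<in> states A \<and> (\<exists>\<sigma>\<in>alph A. s \<in> delta_safe A q \<sigma>)}"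

definition all_edges :: "('q, 's) tNCW \<Rightarrow> ('q \<times> 'q) set" where
  "all_edges A = {(q, s). \<exists>\<sigma>. (q, \<sigma>, s) \<in> Delta A}"

definition all_reachable :: "('q, 's) tNCW \<Rightarrow> bool" where
  "all_reachable A \<longleftrightarrow> (\<forall>q\<in>states A. (init A, q) \<in> (all_edges A)\<^sup>*)"

definition safe_deterministic :: "('q, 's) tNCW \<Rightarrow> bool" where
  "safe_deterministic A \<longleftrightarrow> (\<forall>q\<in>states A. \<forall>\<sigma>\<in>alph A. card (delta_safe A q \<sigma>) \<le> 1)"

definition normal :: "('q, 's) tNCW \<Rightarrow> bool" where
  "normal A \<longleftrightarrow> (\<forall>q s. (q, s) \<in> (safe_edges A)\<^sup>* \<longrightarrow> (s, q) \<in> (safe_edges A)\<^sup>*)"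

definition sem_deterministic :: "('q, 's) tNCW \<Rightarrow> bool" where
  "sem_deterministic A \<longleftrightarrow> (\<forall>q\<in>states A. \<forall>\<sigma>\<in>alph A. \<forall>s1\<in>trans A q \<sigma>. \<forall>s2\<in>trans A q \<sigma>.
     lang_from A s1 = lang_from A s2)"

definition nice :: "('q, 's) tNCW \<Rightarrow> bool" where
  "nice A \<longleftrightarrow> all_reachable A \<and> (\<forall>q\<in>states A. GFG_state A q) \<and> normal A \<and>
     safe_deterministic A \<and> sem_deterministic A"

text \<open>Minimality among GFG-tNCWs over the same alphabet recognizing the same language.
  Competitors have states in nat (any finite state set can be renamed into nat).\<close>
definition minimal_GFG :: "('q, 's) tNCW \<Rightarrow> bool" where
  "minimal_GFG A \<longleftrightarrow> (\<forall>C :: (nat, 's) tNCW. GFG_tNCW C \<and> alph C = alph A \<and> lang C = lang A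
     \<longrightarrow> card (states A) \<le> card (states C))"

definition safe_isomorphic :: "('q, 's) tNCW \<Rightarrow> ('p, 's) tNCW \<Rightarrow> bool" where
  "safe_isomorphic A B \<longleftrightarrow> (\<exists>\<kappa>. bij_betw \<kappa> (states A) (states B) \<and>
     (\<forall>q\<in>states A. \<forall>q'\<in>states A. \<forall>\<sigma>\<in>alph A.
        q' \<in> delta_safe A q \<sigma> \<longleftrightarrow> \<kappa> q' \<in> delta_safe B (\<kappa> q) \<sigma>))"

end

(* A state q of one tNCW is subsafe to a state s of another if both have the same language and
   every word with a safe run (one avoiding alpha-transitions) from q also has one from s; the
   two are strongly equivalent if each is subsafe to the other.  In nice automata subsafety
   propagates along safe transitions, and every state of A is subsafe to some state of B:
   otherwise, concatenating safe cycles that the strategy of B cannot follow safely produces a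
   word of L(A) on which this strategy visits alpha infinitely often.
   Minimality of A forces every state to be safe-reachable from a subsafe-maximal state, and
   strongly equivalent states to coincide, since otherwise redirecting all transitions to
   representatives of the maximal part gives a smaller GFG-tNCW for L(A).  Starting from
   maximal states, where domination in both directions yields strong equivalence, every state of
   A gets a unique strongly equivalent state of B, and this bijection respects safe
   transitions. *)

theory Submission
  imports Defs "HOL-Library.Omega_Words_Fun"
begin

(* The prefix of Omega_Words_Fun shadows the one of Defs, which takes its arguments in the
   opposite order. *)
lemma Defs_prefix_eq_prefix [simp]: "Defs.prefix w n = prefix n w"
  by (simp add: Defs.prefix_def subsequence_def)

definition normalized :: "('q, 's) tNCW \<Rightarrow> bool" where
  "normalized X \<longleftrightarrow> wf_tNCW X \<and> normal X \<and> safe_deterministic X \<and> sem_deterministic X"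

lemma trans_subset_states:
  "wf_tNCW X \<Longrightarrow> q \<in> states X \<Longrightarrow> \<sigma> \<in> alph X \<Longrightarrow> trans X q \<sigma> \<subseteq> states X"
  by (simp add: wf_tNCW_def)

lemma trans_nonempty:
  "wf_tNCW X \<Longrightarrow> q \<in> states X \<Longrightarrow> \<sigma> \<in> alph X \<Longrightarrow> \<exists>q'. q' \<in> trans X q \<sigma>"
  unfolding wf_tNCW_def by blast

lemma delta_safe_imp_trans: "p \<in> delta_safe X q \<sigma> \<Longrightarrow> p \<in> trans X q \<sigma>"
  by (simp add: delta_safe_def)

lemma delta_safe_unique:
  assumes "wf_tNCW X" "safe_deterministic X" "q \<in> states X" "\<sigma> \<in> alph X"
    and "p \<in> delta_safe X q \<sigma>" "p' \<in> delta_safe X q \<sigma>"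
  shows "p = p'"
proof -
  have "finite (delta_safe X q \<sigma>)"
    using assms(1,3,4) by (metis delta_safe_imp_trans finite_subset subsetI wf_tNCW_def)
  then show ?thesis
    using assms card_le_Suc0_iff_eq by (fastforce simp: safe_deterministic_def)
qed

lemma acc_in_Delta:
  "wf_tNCW X \<Longrightarrow> (x, \<sigma>, y) \<in> acc X \<Longrightarrow> x \<in> states X \<and> \<sigma> \<in> alph X \<and> y \<in> trans X x \<sigma>"
  by (auto simp: wf_tNCW_def Delta_def)

lemma run_in_states:
  assumes "wf_tNCW X" "is_word X w" "is_run X q w r" "q \<in> states X"
  shows "r i \<in> states X"
proof (induction i)
  case 0 show ?case using assms(3,4) by (simp add: is_run_def)
next
  case (Suc i)
  then show ?case
    using trans_subset_states[OF assms(1) Suc.IH, of "w i"] assms(2,3)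
    by (auto simp: is_word_def is_run_def)
qed

lemma is_word_build: "is_word X (\<sigma> ## w) \<longleftrightarrow> \<sigma> \<in> alph X \<and> is_word X w"
  by (metis build.simps is_word_def not0_implies_Suc)

lemma suffix_Suc_0_build [simp]: "suffix (Suc 0) (a ## w) = w"
  by (simp add: suffix_def)

lemma is_run_build:
  "is_run X q (\<sigma> ## w) r \<longleftrightarrow> r 0 = q \<and> r 1 \<in> trans X q \<sigma> \<and> is_run X (r 1) w (suffix 1 r)"
  unfolding is_run_def by (metis build.simps suffix_nth One_nat_def plus_1_eq_Suc not0_implies_Suc)

lemma accepting_MOST: "accepting X w r \<longleftrightarrow> (MOST i. (r i, w i, r (Suc i)) \<notin> acc X)"
  by (simp add: accepting_def eventually_cofinite)

lemma accepting_iff: "accepting X w r \<longleftrightarrow> (\<exists>k. \<forall>i\<ge>k. (r i, w i, r (Suc i)) \<notin> acc X)"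
  by (simp add: accepting_MOST MOST_nat_le)

lemma accepting_build: "accepting X (\<sigma> ## w) r \<longleftrightarrow> accepting X w (suffix 1 r)"
  unfolding accepting_MOST
  using MOST_Suc_iff[of "\<lambda>i. (r i, (\<sigma> ## w) i, r (Suc i)) \<notin> acc X"] by simp

lemma build_in_lang_from:
  "\<sigma> ## w \<in> lang_from X q \<longleftrightarrow> \<sigma> \<in> alph X \<and> (\<exists>q' \<in> trans X q \<sigma>. w \<in> lang_from X q')"
proof
  assume "\<sigma> ## w \<in> lang_from X q"
  then obtain r where "is_word X (\<sigma> ## w)" "is_run X q (\<sigma> ## w) r" "accepting X (\<sigma> ## w) r"
    by (auto simp: lang_from_def)
  then have "\<sigma> \<in> alph X" "r 1 \<in> trans X q \<sigma>"
    "is_word X w" "is_run X (r 1) w (suffix 1 r)" "accepting X w (suffix 1 r)"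
    unfolding is_word_build is_run_build accepting_build by blast+
  then show "\<sigma> \<in> alph X \<and> (\<exists>q' \<in> trans X q \<sigma>. w \<in> lang_from X q')"
    unfolding lang_from_def by blast
next
  assume "\<sigma> \<in> alph X \<and> (\<exists>q' \<in> trans X q \<sigma>. w \<in> lang_from X q')"
  then obtain q' r where "\<sigma> \<in> alph X" "q' \<in> trans X q \<sigma>" "is_word X w" "is_run X q' w r"
    "accepting X w r"
    by (auto simp: lang_from_def)
  moreover have "r 0 = q'" using \<open>is_run X q' w r\<close> by (simp add: is_run_def)
  ultimately have "is_word X (\<sigma> ## w)" "is_run X q (\<sigma> ## w) (q ## r)"
    "accepting X (\<sigma> ## w) (q ## r)"
    by (simp_all add: is_word_build is_run_build accepting_build)
  then show "\<sigma> ## w \<in> lang_from X q"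
    unfolding lang_from_def by blast
qed

lemma lang_from_successor:
  assumes "sem_deterministic X" "q \<in> states X" "\<sigma> \<in> alph X" "q' \<in> trans X q \<sigma>"
  shows "lang_from X q' = {w. \<sigma> ## w \<in> lang_from X q}"
proof (intro set_eqI iffI)
  fix w assume "w \<in> lang_from X q'"
  then show "w \<in> {w. \<sigma> ## w \<in> lang_from X q}"
    using assms(3,4) build_in_lang_from by fastforce
next
  fix w assume "w \<in> {w. \<sigma> ## w \<in> lang_from X q}"
  then obtain q'' where q'': "q'' \<in> trans X q \<sigma>" "w \<in> lang_from X q''"
    using build_in_lang_from by fastforce
  have "lang_from X q'' = lang_from X q'"
    using assms q''(1) unfolding sem_deterministic_def by blast
  then show "w \<in> lang_from X q'" using q''(2) by simp
qed

section \<open>Safe languages\<close>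

definition safe_lang :: "('q, 's) tNCW \<Rightarrow> 'q \<Rightarrow> (nat \<Rightarrow> 's) set" where
  "safe_lang X q = {w. is_word X w \<and> (\<exists>r. is_run X q w r \<and> (\<forall>i. (r i, w i, r (Suc i)) \<notin> acc X))}"

lemma safe_lang_subset_lang_from: "safe_lang X q \<subseteq> lang_from X q"
  by (auto simp: safe_lang_def lang_from_def accepting_def)

lemma run_suffix_in_safe_lang:
  assumes "is_word X w" "is_run X q w r" "\<forall>i\<ge>k. (r i, w i, r (Suc i)) \<notin> acc X"
  shows "suffix k w \<in> safe_lang X (r k)"
  using assms unfolding safe_lang_def is_word_def is_run_def
  by (auto intro!: exI[of _ "suffix k r"])

lemma build_in_safe_lang:
  "\<sigma> ## w \<in> safe_lang X q \<longleftrightarrow> \<sigma> \<in> alph X \<and> (\<exists>q' \<in> delta_safe X q \<sigma>. w \<in> safe_lang X q')"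
proof
  assume "\<sigma> ## w \<in> safe_lang X q"
  then obtain r where "is_word X (\<sigma> ## w)" "is_run X q (\<sigma> ## w) r"
    and safe: "\<forall>i. (r i, (\<sigma> ## w) i, r (Suc i)) \<notin> acc X"
    by (auto simp: safe_lang_def)
  moreover have "(r 0, \<sigma>, r 1) \<notin> acc X" "\<forall>i. (suffix 1 r i, w i, suffix 1 r (Suc i)) \<notin> acc X"
    using safe[rule_format, of 0] safe[rule_format, of "Suc _"] by simp_all
  ultimately show "\<sigma> \<in> alph X \<and> (\<exists>q' \<in> delta_safe X q \<sigma>. w \<in> safe_lang X q')"
    unfolding safe_lang_def
    by (auto simp: is_word_build is_run_build delta_safe_def intro!: exI[of _ "suffix 1 r"])
next
  assume "\<sigma> \<in> alph X \<and> (\<exists>q' \<in> delta_safe X q \<sigma>. w \<in> safe_lang X q')"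
  then obtain q' r where "\<sigma> \<in> alph X" "q' \<in> delta_safe X q \<sigma>" "is_word X w" "is_run X q' w r"
    and safe: "\<forall>i. (r i, w i, r (Suc i)) \<notin> acc X"
    by (auto simp: safe_lang_def)
  moreover have "r 0 = q'" using \<open>is_run X q' w r\<close> by (simp add: is_run_def)
  moreover have "((q ## r) i, (\<sigma> ## w) i, (q ## r) (Suc i)) \<notin> acc X" for i
    using calculation by (cases i) (simp_all add: delta_safe_def)
  ultimately have "is_word X (\<sigma> ## w)" "is_run X q (\<sigma> ## w) (q ## r)"
    "\<forall>i. ((q ## r) i, (\<sigma> ## w) i, (q ## r) (Suc i)) \<notin> acc X"
    by (simp_all add: is_word_build is_run_build delta_safe_def)
  then show "\<sigma> ## w \<in> safe_lang X q"
    unfolding safe_lang_def by blast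
qed

definition subsafe :: "('q, 's) tNCW \<Rightarrow> 'q \<Rightarrow> ('p, 's) tNCW \<Rightarrow> 'p \<Rightarrow> bool" where
  "subsafe X a Y c \<longleftrightarrow> lang_from X a = lang_from Y c \<and> safe_lang X a \<subseteq> safe_lang Y c"

definition strongly_equiv :: "('q, 's) tNCW \<Rightarrow> 'q \<Rightarrow> ('p, 's) tNCW \<Rightarrow> 'p \<Rightarrow> bool" where
  "strongly_equiv X a Y c \<longleftrightarrow> lang_from X a = lang_from Y c \<and> safe_lang X a = safe_lang Y c"

lemma subsafe_refl: "subsafe X a X a"
  by (simp add: subsafe_def)

lemma subsafe_trans: "subsafe X a Y b \<Longrightarrow> subsafe Y b Z c \<Longrightarrow> subsafe X a Z c"
  by (auto simp: subsafe_def)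

lemma strongly_equiv_iff_subsafe: "strongly_equiv X a Y c \<longleftrightarrow> subsafe X a Y c \<and> subsafe Y c X a"
  by (auto simp: strongly_equiv_def subsafe_def)

lemma strongly_equiv_refl: "strongly_equiv X a X a"
  by (simp add: strongly_equiv_def)

lemma strongly_equiv_sym: "strongly_equiv X a Y c \<Longrightarrow> strongly_equiv Y c X a"
  by (simp add: strongly_equiv_def)

lemma strongly_equiv_trans:
  "strongly_equiv X a Y b \<Longrightarrow> strongly_equiv Y b Z c \<Longrightarrow> strongly_equiv X a Z c"
  by (simp add: strongly_equiv_def)

lemma safe_lang_nonempty_if_closed:
  assumes "\<forall>x\<in>S. \<exists>\<sigma>\<in>alph X. delta_safe X x \<sigma> \<inter> S \<noteq> {}" "q \<in> S"
  shows "safe_lang X q \<noteq> {}"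
proof -
  obtain r where r: "\<forall>n. (r n \<in> S \<and> (n = 0 \<longrightarrow> r n = q))
      \<and> (\<exists>\<sigma>\<in>alph X. r (Suc n) \<in> delta_safe X (r n) \<sigma>)"
    using dependent_nat_choice[of "\<lambda>n x. x \<in> S \<and> (n = 0 \<longrightarrow> x = q)"
        "\<lambda>_ x y. \<exists>\<sigma>\<in>alph X. y \<in> delta_safe X x \<sigma>"] assms
    by blast
  then obtain w where "\<forall>n. w n \<in> alph X \<and> r (Suc n) \<in> delta_safe X (r n) (w n)"
    by metis
  then have "w \<in> safe_lang X q"
    using r unfolding safe_lang_def is_word_def is_run_def delta_safe_def by auto
  then show ?thesis by blast
qed

(* By normality the target of a safe transition lies on a safe cycle. *)
lemma safe_lang_nonempty:
  assumes "normal X" "(q, q') \<in> safe_edges X"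
  shows "safe_lang X q' \<noteq> {}"
proof (rule safe_lang_nonempty_if_closed)
  show "q' \<in> Range (safe_edges X)" using assms(2) by blast
  show "\<forall>x \<in> Range (safe_edges X). \<exists>\<sigma>\<in>alph X. delta_safe X x \<sigma> \<inter> Range (safe_edges X) \<noteq> {}"
  proof
    fix x assume "x \<in> Range (safe_edges X)"
    then obtain y where "(y, x) \<in> safe_edges X" by blast
    moreover from this have "(x, y) \<in> (safe_edges X)\<^sup>*"
      using assms(1) unfolding normal_def by blast
    ultimately obtain z where "(x, z) \<in> safe_edges X"
      by (auto elim: converse_rtranclE)
    then show "\<exists>\<sigma>\<in>alph X. delta_safe X x \<sigma> \<inter> Range (safe_edges X) \<noteq> {}"
      by (auto simp: safe_edges_def)
  qed
qed

lemma subsafe_step: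
  assumes X: "normal X" "sem_deterministic X" "a \<in> states X"
    and Y: "wf_tNCW Y" "safe_deterministic Y" "sem_deterministic Y" "c \<in> states Y"
    and ac: "subsafe X a Y c" and \<sigma>: "\<sigma> \<in> alph X" and a': "a' \<in> delta_safe X a \<sigma>"
  shows "\<exists>c' \<in> delta_safe Y c \<sigma>. subsafe X a' Y c'"
proof -
  have to_Y: "\<sigma> \<in> alph Y \<and> (\<exists>c' \<in> delta_safe Y c \<sigma>. v \<in> safe_lang Y c')"
    if "v \<in> safe_lang X a'" for v
  proof -
    have "\<sigma> ## v \<in> safe_lang X a" using build_in_safe_lang[of \<sigma> v X a] that \<sigma> a' by blast
    then have "\<sigma> ## v \<in> safe_lang Y c" using ac by (auto simp: subsafe_def)
    then show ?thesis using build_in_safe_lang[of \<sigma> v Y c] by blast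
  qed
  have "(a, a') \<in> safe_edges X" using X(3) \<sigma> a' by (auto simp: safe_edges_def)
  then obtain v where "v \<in> safe_lang X a'" using safe_lang_nonempty[OF X(1)] by blast
  then obtain c' where \<sigma>Y: "\<sigma> \<in> alph Y" and c': "c' \<in> delta_safe Y c \<sigma>" using to_Y by blast
  have "safe_lang X a' \<subseteq> safe_lang Y c'"
  proof
    fix v assume "v \<in> safe_lang X a'"
    then obtain c'' where "c'' \<in> delta_safe Y c \<sigma>" "v \<in> safe_lang Y c''" using to_Y by blast
    moreover have "c'' = c'" using delta_safe_unique[OF Y(1,2,4) \<sigma>Y] c' calculation(1) by blast
    ultimately show "v \<in> safe_lang Y c'" by simp
  qed
  moreover have "lang_from X a' = lang_from Y c'"
  proof -
    have "lang_from X a' = {w. \<sigma> ## w \<in> lang_from X a}"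
      using lang_from_successor[OF X(2,3) \<sigma> delta_safe_imp_trans[OF a']] .
    also have "\<dots> = {w. \<sigma> ## w \<in> lang_from Y c}"
      using ac by (simp add: subsafe_def)
    also have "\<dots> = lang_from Y c'"
      using lang_from_successor[OF Y(3,4) \<sigma>Y delta_safe_imp_trans[OF c']] by simp
    finally show ?thesis .
  qed
  ultimately show ?thesis using c' by (auto simp: subsafe_def)
qed

lemma strongly_equiv_step:
  assumes X: "normalized X" "a \<in> states X" and Y: "normalized Y" "c \<in> states Y"
    and XY: "alph X = alph Y" and ac: "strongly_equiv X a Y c"
    and \<sigma>: "\<sigma> \<in> alph X" and a': "a' \<in> delta_safe X a \<sigma>"
  shows "\<exists>c' \<in> delta_safe Y c \<sigma>. strongly_equiv X a' Y c'"
proof -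
  have nX: "wf_tNCW X" "normal X" "safe_deterministic X" "sem_deterministic X"
    and nY: "wf_tNCW Y" "normal Y" "safe_deterministic Y" "sem_deterministic Y"
    using X(1) Y(1) by (simp_all add: normalized_def)
  have "subsafe X a Y c" "subsafe Y c X a" using ac by (simp_all add: strongly_equiv_iff_subsafe)
  obtain c' where c': "c' \<in> delta_safe Y c \<sigma>" "subsafe X a' Y c'"
    using subsafe_step[OF nX(2,4) X(2) nY(1,3,4) Y(2) \<open>subsafe X a Y c\<close> \<sigma> a'] by blast
  obtain a'' where a'': "a'' \<in> delta_safe X a \<sigma>" "subsafe Y c' X a''"
    using subsafe_step[OF nY(2,4) Y(2) nX(1,3,4) X(2) \<open>subsafe Y c X a\<close> _ c'(1)] \<sigma> XY by blast
  have "a'' = a'" using delta_safe_unique[OF nX(1,3) X(2) \<sigma> a''(1) a'] .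
  then show ?thesis using c' a'' by (auto simp: strongly_equiv_iff_subsafe)
qed

inductive walk :: "'s set \<Rightarrow> ('q \<Rightarrow> 's \<Rightarrow> 'q set) \<Rightarrow> 'q \<Rightarrow> 's list \<Rightarrow> 'q \<Rightarrow> bool"
  for S T q where
  walk_Nil: "walk S T q [] q"
| walk_snoc: "walk S T q v p \<Longrightarrow> \<sigma> \<in> S \<Longrightarrow> p' \<in> T p \<sigma> \<Longrightarrow> walk S T q (v @ [\<sigma>]) p'"

abbreviation path :: "('q, 's) tNCW \<Rightarrow> 'q \<Rightarrow> 's list \<Rightarrow> 'q \<Rightarrow> bool" where
  "path X \<equiv> walk (alph X) (trans X)"

abbreviation safe_path :: "('q, 's) tNCW \<Rightarrow> 'q \<Rightarrow> 's list \<Rightarrow> 'q \<Rightarrow> bool" where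
  "safe_path X \<equiv> walk (alph X) (delta_safe X)"

lemma walk_append: "walk S T p v' p' \<Longrightarrow> walk S T q v p \<Longrightarrow> walk S T q (v @ v') p'"
  by (induction rule: walk.induct) (auto simp flip: append_assoc intro: walk.intros)

lemma walk_snoc_iff:
  "walk S T q (v @ [\<sigma>]) p' \<longleftrightarrow> (\<exists>p. walk S T q v p \<and> \<sigma> \<in> S \<and> p' \<in> T p \<sigma>)"
  by (auto elim: walk.cases intro: walk.intros)

lemma walk_take: "walk S T q v p \<Longrightarrow> \<exists>p'. walk S T q (take n v) p'"
proof (induction rule: walk.induct)
  case (walk_snoc v p \<sigma> p')
  then show ?case by (cases "n \<le> length v") (auto intro: walk.intros)
qed (auto intro: walk.intros)

lemma walk_set: "walk S T q v p \<Longrightarrow> set v \<subseteq> S"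
  by (induction rule: walk.induct) auto

lemma walk_closed:
  "walk S T q v p \<Longrightarrow> (\<And>x \<sigma>. x \<in> Q \<Longrightarrow> \<sigma> \<in> S \<Longrightarrow> T x \<sigma> \<subseteq> Q) \<Longrightarrow> q \<in> Q \<Longrightarrow> p \<in> Q"
  by (induction rule: walk.induct) auto

lemma rtrancl_imp_walk:
  assumes "(x, y) \<in> E\<^sup>*" "\<And>x y. (x, y) \<in> E \<Longrightarrow> \<exists>\<sigma>\<in>S. y \<in> T x \<sigma>"
  shows "\<exists>v. walk S T x v y"
  using assms(1)
proof (induction rule: rtrancl_induct)
  case (step y z)
  then show ?case using assms(2)[OF step.hyps(2)] by (auto intro: walk_snoc)
qed (auto intro: walk.intros)

lemma safe_path_imp_path: "safe_path X q v p \<Longrightarrow> path X q v p"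
  by (induction rule: walk.induct) (auto intro: walk.intros delta_safe_imp_trans)

lemma path_in_states: "path X q v p \<Longrightarrow> wf_tNCW X \<Longrightarrow> q \<in> states X \<Longrightarrow> p \<in> states X"
  by (erule walk_closed) (simp_all add: wf_tNCW_def)

lemma all_reachable_path: "all_reachable X \<Longrightarrow> q \<in> states X \<Longrightarrow> \<exists>u. path X (init X) u q"
  unfolding all_reachable_def
  by (auto intro: rtrancl_imp_walk simp: all_edges_def Delta_def)

lemma lang_from_path:
  assumes "path X q v p" "wf_tNCW X" "sem_deterministic X" "q \<in> states X"
  shows "lang_from X p = {w. v \<frown> w \<in> lang_from X q}"
  using assms(1)
proof (induction rule: walk.induct)
  case (walk_snoc v p \<sigma> p')
  have "p \<in> states X" using path_in_states[OF walk_snoc.hyps(1) assms(2,4)] .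
  then show ?case
    using lang_from_successor[OF assms(3) _ walk_snoc.hyps(2,3)] walk_snoc.IH by simp
qed simp

lemma lang_from_paths_eq:
  assumes "wf_tNCW X" "sem_deterministic X" "x \<in> states X" "path X x v x'"
    and "wf_tNCW Y" "sem_deterministic Y" "y \<in> states Y" "path Y y v y'"
    and "lang_from X x = lang_from Y y"
  shows "lang_from X x' = lang_from Y y'"
  using lang_from_path[OF assms(4,1-3)] lang_from_path[OF assms(8,5-7)] assms(9) by simp

lemma safe_path_unique:
  assumes "wf_tNCW X" "safe_deterministic X" "q \<in> states X"
  shows "safe_path X q v p \<Longrightarrow> safe_path X q v p' \<Longrightarrow> p = p'"
proof (induction v arbitrary: p p' rule: rev_induct)
  case Nil then show ?case by (auto elim: walk.cases)
next
  case (snoc \<sigma> v)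
  obtain x where x: "safe_path X q v x" "p \<in> delta_safe X x \<sigma>" "\<sigma> \<in> alph X"
    using snoc.prems(1) by (auto simp: walk_snoc_iff)
  obtain x' where x': "safe_path X q v x'" "p' \<in> delta_safe X x' \<sigma>"
    using snoc.prems(2) by (auto simp: walk_snoc_iff)
  have "x' = x" using snoc.IH[OF x'(1) x(1)] .
  moreover have "x \<in> states X" using path_in_states[OF safe_path_imp_path[OF x(1)] assms(1,3)] .
  ultimately show ?case using delta_safe_unique[OF assms(1,2) _ x(3) x(2)] x'(2) by simp
qed

lemma run_segment_safe_path:
  assumes "is_word X w" "is_run X q w r"
    and "\<forall>i. t \<le> i \<longrightarrow> i < t + n \<longrightarrow> (r i, w i, r (Suc i)) \<notin> acc X"
  shows "safe_path X (r t) (w [t \<rightarrow> t + n]) (r (t + n))"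
  using assms(3)
proof (induction n)
  case 0 then show ?case by (simp add: walk_Nil)
next
  case (Suc n)
  have "r (Suc (t + n)) \<in> delta_safe X (r (t + n)) (w (t + n))"
    using assms(2) Suc.prems by (simp add: is_run_def delta_safe_def)
  then show ?case
    using Suc assms(1) by (auto simp: is_word_def intro: walk_snoc)
qed

lemma accepting_run_eventually_safe:
  assumes "is_word X w" "is_run X q w r" "accepting X w r"
  obtains m where "\<And>t n. m \<le> t \<Longrightarrow> safe_path X (r t) (w [t \<rightarrow> t + n]) (r (t + n))"
proof -
  obtain m where "\<forall>i\<ge>m. (r i, w i, r (Suc i)) \<notin> acc X"
    using assms(3) unfolding accepting_iff by blast
  then have "safe_path X (r t) (w [t \<rightarrow> t + n]) (r (t + n))" if "m \<le> t" for t n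
    using run_segment_safe_path[OF assms(1,2)] that by simp
  then show thesis using that by blast
qed

lemma safe_lang_iff_safe_paths:
  assumes "wf_tNCW X" "safe_deterministic X" "q \<in> states X" "is_word X w"
  shows "w \<in> safe_lang X q \<longleftrightarrow> (\<forall>n. \<exists>p. safe_path X q (prefix n w) p)"
proof
  assume "w \<in> safe_lang X q"
  then obtain r where "is_run X q w r" "\<forall>i. (r i, w i, r (Suc i)) \<notin> acc X"
    by (auto simp: safe_lang_def)
  then show "\<forall>n. \<exists>p. safe_path X q (prefix n w) p"
    using run_segment_safe_path[OF assms(4), of q r 0] by (auto simp: is_run_def)
next
  assume paths: "\<forall>n. \<exists>p. safe_path X q (prefix n w) p"
  define r where "r n = (THE p. safe_path X q (prefix n w) p)" for n
  have r: "safe_path X q (prefix n w) (r n)" for n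
    unfolding r_def using paths safe_path_unique[OF assms(1-3)] by (metis theI)
  have "r 0 = q"
    using safe_path_unique[OF assms(1-3) r[of 0]] by (simp add: walk_Nil)
  moreover have "r (Suc n) \<in> delta_safe X (r n) (w n)" for n
    using r[of "Suc n"] safe_path_unique[OF assms(1-3) r[of n]] by (auto simp: walk_snoc_iff)
  ultimately show "w \<in> safe_lang X q"
    using assms(4) by (auto simp: safe_lang_def is_run_def delta_safe_def)
qed

lemma safe_path_return:
  assumes "normal X" "wf_tNCW X" "q \<in> states X" "safe_path X q v p"
  shows "\<exists>v'. safe_path X p v' q"
proof -
  have "(q, p) \<in> (safe_edges X)\<^sup>*"
    using assms(4)
  proof (induction rule: walk.induct)
    case (walk_snoc v p \<sigma> p')
    have "p \<in> states X" using path_in_states[OF safe_path_imp_path] walk_snoc.hyps(1) assms(2,3) .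
    then have "(p, p') \<in> safe_edges X" using walk_snoc.hyps(2,3) by (auto simp: safe_edges_def)
    then show ?case using walk_snoc.IH by simp
  qed simp
  then have "(p, q) \<in> (safe_edges X)\<^sup>*" using assms(1) by (simp add: normal_def)
  then show ?thesis by (rule rtrancl_imp_walk) (auto simp: safe_edges_def)
qed

lemma safe_lang_if_safe_prefixes:
  assumes "wf_tNCW X" "safe_deterministic X" "q \<in> states X"
    and long: "\<And>n. \<exists>m\<ge>n. \<exists>p. safe_path X q (prefix m w) p"
  shows "w \<in> safe_lang X q"
proof -
  have "\<exists>p. safe_path X q (prefix n w) p" for n
  proof -
    obtain m p where "n \<le> m" "safe_path X q (prefix m w) p" using long by blast
    then show ?thesis using walk_take[of _ _ q "prefix m w" p n] by (auto simp: min_def)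
  qed
  moreover have "is_word X w"
    unfolding is_word_def
  proof
    fix i
    obtain m p where "Suc i \<le> m" "safe_path X q (prefix m w) p" using long by blast
    then show "w i \<in> alph X" using walk_set by fastforce
  qed
  ultimately show ?thesis using safe_lang_iff_safe_paths[OF assms(1-3)] by blast
qed

definition strategy :: "('q, 's) tNCW \<Rightarrow> ('s list \<Rightarrow> 'q) \<Rightarrow> bool" where
  "strategy X f \<longleftrightarrow> (\<forall>u \<sigma>. set u \<subseteq> alph X \<and> \<sigma> \<in> alph X \<longrightarrow> (f u, \<sigma>, f (u @ [\<sigma>])) \<in> Delta X)"

lemma GFG_state_iff:
  "GFG_state X q \<longleftrightarrow>
     (\<exists>f. f [] = q \<and> strategy X f \<and> (\<forall>w \<in> lang_from X q. accepting X w (\<lambda>i. f (prefix i w))))"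
  by (simp add: GFG_state_def strategy_def accepting_def)

lemma strategy_path: "strategy X f \<Longrightarrow> set u \<subseteq> alph X \<Longrightarrow> path X (f []) u (f u)"
proof (induction u rule: rev_induct)
  case (snoc \<sigma> u)
  then show ?case by (auto simp: strategy_def Delta_def intro: walk_snoc)
qed (simp add: walk_Nil)

lemma strategy_run:
  assumes "strategy X f" "is_word X w"
  shows "is_run X (f []) w (\<lambda>i. f (prefix i w))"
proof -
  have "set (prefix i w) \<subseteq> alph X" "w i \<in> alph X" for i
    using assms(2) by (auto simp: is_word_def)
  then show ?thesis using assms(1) by (auto simp: strategy_def is_run_def Delta_def)
qed

section \<open>Subsafe partners\<close>

lemma escaping_safe_cycle:
  assumes X: "wf_tNCW X" "normal X" "q \<in> states X"
    and Y: "wf_tNCW Y" "safe_deterministic Y" "s \<in> states Y"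
    and "alph X = alph Y" and "\<not> safe_lang X q \<subseteq> safe_lang Y s"
  obtains \<beta> where "safe_path X q \<beta> q" "\<nexists>p. safe_path Y s \<beta> p"
proof -
  obtain w where w: "w \<in> safe_lang X q" "w \<notin> safe_lang Y s"
    using assms(8) by blast
  then obtain r where r: "is_word X w" "is_run X q w r" "\<forall>i. (r i, w i, r (Suc i)) \<notin> acc X"
    by (auto simp: safe_lang_def)
  then have "is_word Y w" using assms(7) by (simp add: is_word_def)
  then obtain n where blocked: "\<nexists>p. safe_path Y s (prefix n w) p"
    using safe_lang_iff_safe_paths[OF Y] w(2) by blast
  have "safe_path X q (prefix n w) (r n)"
    using run_segment_safe_path[OF r(1,2), of 0 n] r(2,3) by (simp add: is_run_def)
  moreover obtain v where "safe_path X (r n) v q"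
    using safe_path_return[OF X(2,1,3) calculation] by blast
  ultimately have "safe_path X q (prefix n w @ v) q" by (rule walk_append[rotated])
  moreover have "\<nexists>p. safe_path Y s (prefix n w @ v) p"
    using blocked walk_take[of "alph Y" "delta_safe Y" s "prefix n w @ v" _ n] by auto
  ultimately show thesis using that by blast
qed

lemma strategy_escaping_safe_cycle:
  assumes X: "normalized X" "q \<in> states X" "path X (init X) v q"
    and Y: "wf_tNCW Y" "safe_deterministic Y" "sem_deterministic Y" "strategy Y f" "f [] = init Y"
    and XY: "alph X = alph Y" "lang X = lang Y"
    and none: "\<not> (\<exists>s\<in>states Y. subsafe X q Y s)"
  obtains \<beta> where "safe_path X q \<beta> q" "\<nexists>p. safe_path Y (f v) \<beta> p"
proof -
  have nX: "wf_tNCW X" "normal X" "sem_deterministic X" using X(1) by (simp_all add: normalized_def)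
  have init: "init X \<in> states X" "init Y \<in> states Y" using nX(1) Y(1) by (simp_all add: wf_tNCW_def)
  have fv: "path Y (init Y) v (f v)"
    using strategy_path[OF Y(4)] walk_set[OF X(3)] XY(1) Y(5) by auto
  then have fvY: "f v \<in> states Y" using path_in_states[OF _ Y(1) init(2)] by blast
  have "lang_from X q = lang_from Y (f v)"
    using lang_from_paths_eq[OF nX(1,3) init(1) X(3) Y(1,3) init(2) fv] XY(2)
    by (simp add: lang_def)
  then have "\<not> safe_lang X q \<subseteq> safe_lang Y (f v)"
    using none fvY by (auto simp: subsafe_def)
  then show thesis using escaping_safe_cycle[OF nX(1,2) X(2) Y(1,2) fvY XY(1)] that by blast
qed

lemma limit_word:
  assumes "\<And>k. \<exists>t. T (Suc k) = T k @ t" "\<And>k. k \<le> length (T k)"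
  obtains w where "\<And>k. prefix (length (T k)) w = T k"
proof
  have extends: "\<exists>t. T m = T k @ t" if "k \<le> m" for k m
    using that
  proof (induction rule: dec_induct)
    case (step m)
    then show ?case using assms(1)[of m] by (metis append.assoc)
  qed simp
  define w where "w i = T (Suc i) ! i" for i
  have nth: "w i = T k ! i" if "i < length (T k)" for i k
  proof -
    obtain t t' where "T (max k (Suc i)) = T k @ t" "T (max k (Suc i)) = T (Suc i) @ t'"
      using extends[of k] extends[of "Suc i"] by (metis max.cobounded1 max.cobounded2)
    moreover have "i < length (T (Suc i))" using assms(2)[of "Suc i"] by simp
    ultimately show ?thesis using that by (metis nth_append w_def)
  qed
  show "prefix (length (T k)) w = T k" for k
    by (rule nth_equalityI) (simp_all add: nth)
qed

lemma iterate_safe_cycles: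
  assumes "\<And>t. safe_path X q t q \<Longrightarrow> safe_path X q (\<beta> t) q \<and> \<beta> t \<noteq> []"
  obtains T W where "\<And>k. T (Suc k) = T k @ \<beta> (T k)" "\<And>k. safe_path X q (T k) q"
    "\<And>k. k \<le> length (T k)" "\<And>k. prefix (length (T k)) W = T k"
proof -
  define T where "T = rec_nat [] (\<lambda>_ t. t @ \<beta> t)"
  have T_Suc: "T (Suc k) = T k @ \<beta> (T k)" for k by (simp add: T_def)
  have T_cycle: "safe_path X q (T k) q" for k
  proof (induction k)
    case (Suc k)
    then show ?case using assms walk_append T_Suc by metis
  qed (simp add: T_def walk_Nil)
  have "k \<le> length (T k)" for k
  proof (induction k)
    case (Suc k)
    have "\<beta> (T k) \<noteq> []" using assms[OF T_cycle[of k]] by simp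
    with Suc.IH show ?case by (cases "\<beta> (T k)") (simp_all add: T_Suc)
  qed simp
  moreover obtain W where "\<And>k. prefix (length (T k)) W = T k"
    using limit_word[of T] T_Suc calculation by blast
  ultimately show thesis using that T_Suc T_cycle by blast
qed

(* If no state of Y dominates q, safe cycles at q that the strategy of Y cannot follow safely
   are concatenated into a word of L(X) on which the strategy is not accepting. *)
lemma exists_subsafe_state:
  assumes X: "normalized X" "all_reachable X" "q \<in> states X"
    and Y: "GFG_tNCW Y" "safe_deterministic Y" "sem_deterministic Y"
    and XY: "alph X = alph Y" "lang X = lang Y"
  shows "\<exists>s\<in>states Y. subsafe X q Y s"
proof (rule ccontr)
  assume none: "\<not> (\<exists>s\<in>states Y. subsafe X q Y s)"
  have nX: "wf_tNCW X" "safe_deterministic X" "sem_deterministic X"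
    using X(1) by (simp_all add: normalized_def)
  have wY: "wf_tNCW Y" using Y(1) by (simp add: GFG_tNCW_def)
  have init: "init X \<in> states X" "init Y \<in> states Y" using nX(1) wY by (simp_all add: wf_tNCW_def)
  obtain u where u: "path X (init X) u q" using all_reachable_path[OF X(2,3)] by blast
  obtain f where f: "f [] = init Y" "strategy Y f" "\<forall>w \<in> lang Y. accepting Y w (\<lambda>i. f (prefix i w))"
    using Y(1) by (auto simp: GFG_tNCW_def GFG_def GFG_state_iff lang_def)
  have "\<exists>\<beta>. safe_path X q \<beta> q \<and> (\<nexists>p. safe_path Y (f (u @ t)) \<beta> p)" if "safe_path X q t q" for t
    using strategy_escaping_safe_cycle[OF X(1,3) walk_append[OF safe_path_imp_path[OF that] u]
        wY Y(2,3) f(2,1) XY none] by metis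
  then obtain \<beta> where \<beta>: "\<And>t. safe_path X q t q \<Longrightarrow>
      safe_path X q (\<beta> t) q \<and> (\<nexists>p. safe_path Y (f (u @ t)) (\<beta> t) p)"
    by metis
  then have "safe_path X q (\<beta> t) q \<and> \<beta> t \<noteq> []" if "safe_path X q t q" for t
    using that walk_Nil by metis
  then obtain T W where T: "\<And>k. T (Suc k) = T k @ \<beta> (T k)" "\<And>k. safe_path X q (T k) q"
      "\<And>k. k \<le> length (T k)" and W: "\<And>k. prefix (length (T k)) W = T k"
    using iterate_safe_cycles[of X q \<beta>] by blast
  have "W \<in> safe_lang X q"
    using T(2,3) W by (intro safe_lang_if_safe_prefixes[OF nX(1,2) X(3)]) metis
  then have "u \<frown> W \<in> lang Y"
    using lang_from_path[OF u nX(1,3) init(1)] safe_lang_subset_lang_from[of X q] XY(2)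
    by (auto simp: lang_def)
  moreover from this have word: "is_word Y (u \<frown> W)" by (simp add: lang_def lang_from_def)
  ultimately obtain m where m: "\<And>t n. m \<le> t \<Longrightarrow>
      safe_path Y (f (prefix t (u \<frown> W))) ((u \<frown> W) [t \<rightarrow> t + n]) (f (prefix (t + n) (u \<frown> W)))"
    using accepting_run_eventually_safe[OF word strategy_run[OF f(2) word]] f(1,3) by metis
  define t where "t = length u + length (T m)"
  let ?\<beta> = "\<beta> (T m)"
  have "prefix t (u \<frown> W) = u @ T m" "prefix (t + length ?\<beta>) (u \<frown> W) = (u @ T m) @ ?\<beta>"
    using W[of m] W[of "Suc m"] by (simp_all add: t_def T(1))
  then have "(u \<frown> W) [t \<rightarrow> t + length ?\<beta>] = ?\<beta>" "f (prefix t (u \<frown> W)) = f (u @ T m)"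
    using subsequence_append[where w = "u \<frown> W" and i = t and j = "length ?\<beta>"] by simp_all
  moreover have "m \<le> t" using T(3)[of m] by (simp add: t_def)
  ultimately show False using m[of t "length ?\<beta>"] \<beta>[OF T(2)] by metis
qed

lemma finite_resets:
  fixes reset dominated :: "nat \<Rightarrow> bool"
  assumes "\<And>i. k \<le> i \<Longrightarrow> dominated i \<Longrightarrow> \<not> reset i \<and> dominated (Suc i)"
    and "\<And>i. reset i \<Longrightarrow> dominated (Suc i)"
  shows "finite {i. reset i}"
proof (cases "\<exists>i\<ge>k. reset i")
  case True
  then obtain i where i: "k \<le> i" "reset i" by blast
  have "dominated j" if "Suc i \<le> j" for j
    using that
  proof (induction rule: dec_induct)
    case base then show ?case using assms(2) i(2) .
  next
    case (step j) then show ?case using assms(1) i(1) by simp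
  qed
  then have "\<not> reset j" if "i < j" for j
    using assms(1) i(1) that by (simp add: Suc_le_eq)
  then have "{i. reset i} \<subseteq> {..i}"
    by (auto simp flip: not_less)
  then show ?thesis using finite_subset by blast
next
  case False
  then have "{i. reset i} \<subseteq> {..<k}" by (auto simp flip: not_le)
  then show ?thesis using finite_subset by blast
qed

section \<open>Reduction to representative states\<close>

definition reduced_trans :: "('q, 's) tNCW \<Rightarrow> 'q set \<Rightarrow> 'q \<Rightarrow> 's \<Rightarrow> 'q set" where
  "reduced_trans A Q x \<sigma> = {y \<in> Q. \<exists>x' \<in> trans A x \<sigma>. lang_from A y = lang_from A x'}"

definition reduced :: "('q, 's) tNCW \<Rightarrow> 'q set \<Rightarrow> ('q \<Rightarrow> 'q) \<Rightarrow> 'q \<Rightarrow> ('q, 's) tNCW" where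
  "reduced A Q rep q\<^sub>0 = \<lparr>alph = alph A, states = Q, init = q\<^sub>0, trans = reduced_trans A Q,
     acc = {(x, \<sigma>, y). x \<in> Q \<and> \<sigma> \<in> alph A \<and> y \<in> reduced_trans A Q x \<sigma>
       \<and> y \<notin> rep ` delta_safe A x \<sigma>}\<rparr>"

(* The reduced automaton is GFG: its strategy follows the safe transitions of A through rep as
   long as possible, and otherwise resets to D of the state chosen by the strategy f of A. *)
locale reduction =
  fixes A :: "('q, 's) tNCW" and Q :: "'q set" and rep D :: "'q \<Rightarrow> 'q" and f :: "'s list \<Rightarrow> 'q"
  assumes normalized: "normalized A"
    and Q_states: "Q \<subseteq> states A"
    and rep: "\<And>x \<sigma> x'. x \<in> Q \<Longrightarrow> \<sigma> \<in> alph A \<Longrightarrow> x' \<in> delta_safe A x \<sigma> \<Longrightarrow>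
      rep x' \<in> Q \<and> strongly_equiv A x' A (rep x')"
    and D: "\<And>a. a \<in> states A \<Longrightarrow> D a \<in> Q \<and> subsafe A a A (D a)"
    and f_init: "f [] = init A" and f_strategy: "strategy A f"
    and f_accepting: "\<And>w. w \<in> lang A \<Longrightarrow> accepting A w (\<lambda>i. f (prefix i w))"
begin

abbreviation C :: "('q, 's) tNCW" where
  "C \<equiv> reduced A Q rep (D (init A))"

lemma wf_A: "wf_tNCW A" and normal_A: "normal A"
  and safe_det_A: "safe_deterministic A" and sem_det_A: "sem_deterministic A"
  using normalized by (simp_all add: normalized_def)

lemma init_A: "init A \<in> states A"
  using wf_A by (simp add: wf_tNCW_def)

lemma reduced_simps [simp]:
  "alph C = alph A" "states C = Q" "init C = D (init A)" "trans C = reduced_trans A Q"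
  by (simp_all add: reduced_def)

lemma lang_from_D: "a \<in> states A \<Longrightarrow> lang_from A (D a) = lang_from A a"
  using D by (simp add: subsafe_def)

lemma lang_from_reduced_trans:
  assumes "x \<in> states A" "\<sigma> \<in> alph A" "y \<in> reduced_trans A Q x \<sigma>"
  shows "lang_from A y = {w. \<sigma> ## w \<in> lang_from A x}"
  using assms lang_from_successor[OF sem_det_A assms(1,2)] by (auto simp: reduced_trans_def)

lemma delta_safe_reduced:
  assumes "x \<in> Q" "\<sigma> \<in> alph A"
  shows "delta_safe C x \<sigma> = rep ` delta_safe A x \<sigma>"
proof -
  have "rep x' \<in> reduced_trans A Q x \<sigma>" if "x' \<in> delta_safe A x \<sigma>" for x'
    using rep[OF assms that] delta_safe_imp_trans[OF that]
    by (auto simp: reduced_trans_def strongly_equiv_def)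
  then show ?thesis using assms by (auto simp: delta_safe_def reduced_def)
qed

lemma wf_reduced: "wf_tNCW C"
proof -
  have "reduced_trans A Q x \<sigma> \<noteq> {}" if x: "x \<in> Q" and \<sigma>: "\<sigma> \<in> alph A" for x \<sigma>
  proof -
    have "x \<in> states A" using x Q_states by blast
    then obtain x' where x': "x' \<in> trans A x \<sigma>" using trans_nonempty[OF wf_A _ \<sigma>] by blast
    then have "x' \<in> states A" using trans_subset_states[OF wf_A \<open>x \<in> states A\<close> \<sigma>] by blast
    then have "D x' \<in> reduced_trans A Q x \<sigma>"
      using x' D lang_from_D by (auto simp: reduced_trans_def)
    then show ?thesis by blast
  qed
  moreover have "finite Q" using wf_A Q_states finite_subset by (auto simp: wf_tNCW_def)
  ultimately show ?thesis
    using wf_A D[OF init_A]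
    by (auto simp: wf_tNCW_def reduced_def Delta_def reduced_trans_def)
qed

lemma reduced_run_in_Q: "is_run C x w r \<Longrightarrow> x \<in> Q \<Longrightarrow> r i \<in> Q"
  by (induction i) (auto simp: is_run_def reduced_trans_def)

lemma reduced_safe_step:
  assumes x: "x \<in> Q" and \<sigma>: "\<sigma> \<in> alph A" and y: "y \<in> delta_safe C x \<sigma>"
    and z: "z \<in> states A" "strongly_equiv A z A x"
  obtains z' where "z' \<in> delta_safe A z \<sigma>" "z' \<in> states A" "strongly_equiv A z' A y"
proof -
  obtain x' where x': "x' \<in> delta_safe A x \<sigma>" "y = rep x'"
    using delta_safe_reduced[OF x \<sigma>] y by blast
  have "x \<in> states A" using x Q_states by blast
  then obtain z' where z': "z' \<in> delta_safe A z \<sigma>" "strongly_equiv A x' A z'"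
    using strongly_equiv_step[OF normalized _ normalized z(1) refl strongly_equiv_sym[OF z(2)]]
      \<sigma> x'(1) by blast
  have "strongly_equiv A x' A y" using rep[OF x \<sigma> x'(1)] x'(2) by simp
  then have "strongly_equiv A z' A y"
    by (rule strongly_equiv_trans[OF strongly_equiv_sym[OF z'(2)]])
  moreover have "z' \<in> states A"
    using trans_subset_states[OF wf_A z(1) \<sigma>] delta_safe_imp_trans[OF z'(1)] by blast
  ultimately show thesis using that z'(1) by blast
qed

lemma safe_lang_reduced_subset:
  assumes x: "x \<in> Q"
  shows "safe_lang C x \<subseteq> safe_lang A x"
proof
  fix w assume "w \<in> safe_lang C x"
  then obtain r where w: "is_word A w" and r: "is_run C x w r"
    and safe: "\<forall>i. (r i, w i, r (Suc i)) \<notin> acc C"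
    by (auto simp: safe_lang_def is_word_def)
  have step: "r (Suc n) \<in> delta_safe C (r n) (w n)" "r n \<in> Q" "w n \<in> alph A" for n
    using r safe reduced_run_in_Q[OF r x] w by (simp_all add: is_run_def delta_safe_def is_word_def)
  obtain z where z: "\<forall>n. (z n \<in> states A \<and> strongly_equiv A (z n) A (r n) \<and> (n = 0 \<longrightarrow> z n = x))
      \<and> z (Suc n) \<in> delta_safe A (z n) (w n)"
  proof (atomize_elim, rule dependent_nat_choice)
    show "\<exists>z. z \<in> states A \<and> strongly_equiv A z A (r 0) \<and> (0 = 0 \<longrightarrow> z = x)"
      using x Q_states r by (auto simp: is_run_def strongly_equiv_refl)
  next
    fix z n assume "z \<in> states A \<and> strongly_equiv A z A (r n) \<and> (n = 0 \<longrightarrow> z = x)"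
    then obtain z' where "z' \<in> delta_safe A z (w n)" "z' \<in> states A"
      "strongly_equiv A z' A (r (Suc n))"
      using reduced_safe_step[OF step(2,3,1)] by blast
    then show "\<exists>z'. (z' \<in> states A \<and> strongly_equiv A z' A (r (Suc n)) \<and> (Suc n = 0 \<longrightarrow> z' = x))
        \<and> z' \<in> delta_safe A z (w n)"
      by blast
  qed
  then show "w \<in> safe_lang A x"
    using w unfolding safe_lang_def is_run_def delta_safe_def by auto
qed

lemma lang_reduced_subset: "lang C \<subseteq> lang A"
proof
  fix w assume "w \<in> lang C"
  then obtain r where w: "is_word C w" and r: "is_run C (D (init A)) w r" and "accepting C w r"
    unfolding lang_def lang_from_def by auto
  then obtain k where "\<forall>i\<ge>k. (r i, w i, r (Suc i)) \<notin> acc C"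
    unfolding accepting_iff by blast
  then have "suffix k w \<in> safe_lang C (r k)"
    using run_suffix_in_safe_lang[OF w r] by blast
  moreover have rQ: "r i \<in> Q" for i
    using reduced_run_in_Q[OF r] D[OF init_A] by blast
  ultimately have "suffix k w \<in> lang_from A (r k)"
    using safe_lang_reduced_subset[OF rQ] safe_lang_subset_lang_from[of A "r k"] by blast
  moreover have "suffix j w \<in> lang_from A (r j) \<Longrightarrow> w \<in> lang_from A (r 0)" for j
  proof (induction j)
    case (Suc j)
    have "r j \<in> states A" "w j \<in> alph A" "r (Suc j) \<in> reduced_trans A Q (r j) (w j)"
      using rQ[of j] Q_states w r by (auto simp: is_word_def is_run_def)
    then have "lang_from A (r (Suc j)) = {v. w j ## v \<in> lang_from A (r j)}"
      by (rule lang_from_reduced_trans)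
    then have "w j ## suffix (Suc j) w \<in> lang_from A (r j)"
      using Suc.prems by blast
    then have "suffix j w \<in> lang_from A (r j)"
      by (simp only: suffix_singleton_suffix)
    then show ?case by (rule Suc.IH)
  qed simp
  ultimately show "w \<in> lang A"
    using r lang_from_D[OF init_A] by (simp add: is_run_def lang_def)
qed

primrec reduced_strategy_rev :: "'s list \<Rightarrow> 'q" where
  "reduced_strategy_rev [] = D (init A)"
| "reduced_strategy_rev (\<sigma> # u) =
    (if delta_safe A (reduced_strategy_rev u) \<sigma> = {} then D (f (rev (\<sigma> # u)))
     else rep (SOME x. x \<in> delta_safe A (reduced_strategy_rev u) \<sigma>))"

definition reduced_strategy :: "'s list \<Rightarrow> 'q" where
  "reduced_strategy u = reduced_strategy_rev (rev u)"

lemma reduced_strategy_Nil: "reduced_strategy [] = D (init A)"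
  by (simp add: reduced_strategy_def)

lemma reduced_strategy_snoc:
  "reduced_strategy (u @ [\<sigma>]) =
    (if delta_safe A (reduced_strategy u) \<sigma> = {} then D (f (u @ [\<sigma>]))
     else rep (SOME x. x \<in> delta_safe A (reduced_strategy u) \<sigma>))"
  by (simp add: reduced_strategy_def)

lemma f_step:
  assumes "set u \<subseteq> alph A" "\<sigma> \<in> alph A"
  shows "f u \<in> states A" "f (u @ [\<sigma>]) \<in> trans A (f u) \<sigma>"
  using f_strategy assms by (auto simp: strategy_def Delta_def)

lemma reduced_strategy_invariant:
  "set u \<subseteq> alph A \<Longrightarrow>
    reduced_strategy u \<in> Q \<and> lang_from A (reduced_strategy u) = lang_from A (f u)"
proof (induction u rule: rev_induct)
  case Nil
  then show ?case
    using D[OF init_A] lang_from_D[OF init_A] by (simp add: reduced_strategy_Nil f_init)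
next
  case (snoc \<sigma> u)
  let ?g = "reduced_strategy u"
  have u: "set u \<subseteq> alph A" and \<sigma>: "\<sigma> \<in> alph A" using snoc.prems by auto
  have g: "?g \<in> Q" "lang_from A ?g = lang_from A (f u)" using snoc.IH[OF u] by auto
  have fu: "f u \<in> states A" "f (u @ [\<sigma>]) \<in> trans A (f u) \<sigma>" using f_step[OF u \<sigma>] by auto
  then have f\<sigma>: "f (u @ [\<sigma>]) \<in> states A" using trans_subset_states[OF wf_A _ \<sigma>] by blast
  have lang_f\<sigma>: "lang_from A (f (u @ [\<sigma>])) = {v. \<sigma> ## v \<in> lang_from A (f u)}"
    using lang_from_successor[OF sem_det_A fu(1) \<sigma> fu(2)] .
  show ?case
  proof (cases "delta_safe A ?g \<sigma> = {}")
    case True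
    then show ?thesis using D[OF f\<sigma>] lang_from_D[OF f\<sigma>] by (simp add: reduced_strategy_snoc)
  next
    case False
    define x where "x = (SOME x. x \<in> delta_safe A ?g \<sigma>)"
    have x: "x \<in> delta_safe A ?g \<sigma>" using False by (simp add: x_def some_in_eq)
    have "rep x \<in> Q" "lang_from A (rep x) = lang_from A x"
      using rep[OF g(1) \<sigma> x] by (auto simp: strongly_equiv_def)
    moreover have "lang_from A x = {v. \<sigma> ## v \<in> lang_from A ?g}"
      using lang_from_successor[OF sem_det_A _ \<sigma> delta_safe_imp_trans[OF x]] g(1) Q_states by blast
    ultimately show ?thesis
      using False g(2) lang_f\<sigma> by (simp add: reduced_strategy_snoc x_def)
  qed
qed

lemma strategy_reduced_strategy: "strategy C reduced_strategy"
  unfolding strategy_def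
proof (intro allI impI)
  fix u \<sigma> assume "set u \<subseteq> alph C \<and> \<sigma> \<in> alph C"
  then have u: "set u \<subseteq> alph A" and \<sigma>: "\<sigma> \<in> alph A" by auto
  let ?g = "reduced_strategy u" and ?g' = "reduced_strategy (u @ [\<sigma>])"
  have g: "?g \<in> Q" "lang_from A ?g = lang_from A (f u)"
    and g': "?g' \<in> Q" "lang_from A ?g' = lang_from A (f (u @ [\<sigma>]))"
    using reduced_strategy_invariant u \<sigma> by auto
  have gA: "?g \<in> states A" using g(1) Q_states by blast
  obtain x' where x': "x' \<in> trans A ?g \<sigma>" using trans_nonempty[OF wf_A gA \<sigma>] by blast
  have "lang_from A x' = {v. \<sigma> ## v \<in> lang_from A ?g}"
    using lang_from_successor[OF sem_det_A gA \<sigma> x'] .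
  also have "\<dots> = lang_from A (f (u @ [\<sigma>]))"
    using g(2) lang_from_successor[OF sem_det_A f_step(1)[OF u \<sigma>] \<sigma> f_step(2)[OF u \<sigma>]] by simp
  finally have "?g' \<in> reduced_trans A Q ?g \<sigma>"
    using x' g' by (auto simp: reduced_trans_def)
  then show "(?g, \<sigma>, ?g') \<in> Delta C" using g(1) \<sigma> by (simp add: Delta_def)
qed

lemma reduced_strategy_keeps_dominating:
  assumes u: "set u \<subseteq> alph A" and \<sigma>: "\<sigma> \<in> alph A"
    and dominated: "subsafe A (f u) A (reduced_strategy u)"
    and safe: "f (u @ [\<sigma>]) \<in> delta_safe A (f u) \<sigma>"
  shows "delta_safe A (reduced_strategy u) \<sigma> \<noteq> {}"
    and "subsafe A (f (u @ [\<sigma>])) A (reduced_strategy (u @ [\<sigma>]))"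
proof -
  let ?g = "reduced_strategy u"
  have g: "?g \<in> Q" using reduced_strategy_invariant[OF u] by blast
  then have gA: "?g \<in> states A" using Q_states by blast
  obtain c where c: "c \<in> delta_safe A ?g \<sigma>" "subsafe A (f (u @ [\<sigma>])) A c"
    using subsafe_step[OF normal_A sem_det_A f_step(1)[OF u \<sigma>] wf_A safe_det_A sem_det_A gA
        dominated \<sigma> safe] by blast
  then show "delta_safe A ?g \<sigma> \<noteq> {}" by blast
  have "(SOME x. x \<in> delta_safe A ?g \<sigma>) = c"
    using c(1) delta_safe_unique[OF wf_A safe_det_A gA \<sigma> _ c(1)] by (rule some_equality)
  then have "reduced_strategy (u @ [\<sigma>]) = rep c"
    using c(1) by (auto simp: reduced_strategy_snoc)
  moreover have "subsafe A c A (rep c)"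
    using rep[OF g \<sigma> c(1)] by (simp add: strongly_equiv_iff_subsafe)
  ultimately show "subsafe A (f (u @ [\<sigma>])) A (reduced_strategy (u @ [\<sigma>]))"
    using subsafe_trans[OF c(2)] by simp
qed

lemma reduced_strategy_reset:
  assumes "set u \<subseteq> alph A" "\<sigma> \<in> alph A" "delta_safe A (reduced_strategy u) \<sigma> = {}"
  shows "subsafe A (f (u @ [\<sigma>])) A (reduced_strategy (u @ [\<sigma>]))"
proof -
  have "f (u @ [\<sigma>]) \<in> states A"
    using f_step[OF assms(1,2)] trans_subset_states[OF wf_A _ assms(2)] by blast
  then show ?thesis using D assms(3) by (simp add: reduced_strategy_snoc)
qed

lemma reduced_strategy_acc_imp_stuck:
  assumes "set u \<subseteq> alph A" "\<sigma> \<in> alph A"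
    and "(reduced_strategy u, \<sigma>, reduced_strategy (u @ [\<sigma>])) \<in> acc C"
  shows "delta_safe A (reduced_strategy u) \<sigma> = {}"
proof (rule ccontr)
  let ?g = "reduced_strategy u"
  assume "delta_safe A ?g \<sigma> \<noteq> {}"
  then have "reduced_strategy (u @ [\<sigma>]) \<in> delta_safe C ?g \<sigma>"
    using delta_safe_reduced[OF _ assms(2)] reduced_strategy_invariant[OF assms(1)]
    by (simp add: reduced_strategy_snoc some_in_eq)
  then show False using assms(3) by (simp add: delta_safe_def)
qed

(* Once the run of f is safe, a reset makes the reduced strategy dominate it, and domination
   prevents further resets. *)
lemma reduced_strategy_accepting:
  assumes "w \<in> lang A"
  shows "accepting C w (\<lambda>i. reduced_strategy (prefix i w))"
proof -
  let ?a = "\<lambda>i. f (prefix i w)" and ?c = "\<lambda>i. reduced_strategy (prefix i w)"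
  have "is_word A w" using assms by (simp add: lang_def lang_from_def)
  then have wi: "w i \<in> alph A" and pre: "set (prefix i w) \<subseteq> alph A" for i
    by (auto simp: is_word_def)
  obtain k where k: "\<forall>i\<ge>k. (?a i, w i, ?a (Suc i)) \<notin> acc A"
    using f_accepting[OF assms] unfolding accepting_iff by blast
  have "?a (Suc i) \<in> delta_safe A (?a i) (w i)" if "k \<le> i" for i
    using f_step(2)[OF pre wi] k that by (simp add: delta_safe_def)
  then have "finite {i. delta_safe A (?c i) (w i) = {}}"
    using reduced_strategy_keeps_dominating[OF pre wi] reduced_strategy_reset[OF pre wi]
    by (intro finite_resets[where k = k and dominated = "\<lambda>i. subsafe A (?a i) A (?c i)"]) simp_all
  moreover have "{i. (?c i, w i, ?c (Suc i)) \<in> acc C} \<subseteq> {i. delta_safe A (?c i) (w i) = {}}"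
    using reduced_strategy_acc_imp_stuck[OF pre wi] by auto
  ultimately show ?thesis unfolding accepting_def using finite_subset by blast
qed

lemma lang_subset_reduced: "lang A \<subseteq> lang C"
proof
  fix w assume w: "w \<in> lang A"
  then have "is_word C w" by (simp add: lang_def lang_from_def is_word_def)
  moreover from this have "is_run C (init C) w (\<lambda>i. reduced_strategy (prefix i w))"
    using strategy_run[OF strategy_reduced_strategy] by (simp add: reduced_strategy_Nil)
  ultimately show "w \<in> lang C"
    using reduced_strategy_accepting[OF w] by (auto simp: lang_def lang_from_def)
qed

theorem GFG_tNCW_reduced: "GFG_tNCW C" and lang_reduced: "lang C = lang A"
proof -
  show "lang C = lang A" using lang_reduced_subset lang_subset_reduced by blast
  then have "\<forall>w \<in> lang_from C (init C). accepting C w (\<lambda>i. reduced_strategy (prefix i w))"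
    using reduced_strategy_accepting by (simp add: lang_def)
  then show "GFG_tNCW C"
    using wf_reduced strategy_reduced_strategy reduced_strategy_Nil
    by (auto simp: GFG_tNCW_def GFG_def GFG_state_iff)
qed

end

definition rename_states :: "('q \<Rightarrow> 'p) \<Rightarrow> ('q, 's) tNCW \<Rightarrow> ('p, 's) tNCW" where
  "rename_states h X = \<lparr>alph = alph X, states = h ` states X, init = h (init X),
     trans = (\<lambda>p \<sigma>. h ` trans X (inv_into (states X) h p) \<sigma>),
     acc = (\<lambda>(x, \<sigma>, y). (h x, \<sigma>, h y)) ` acc X\<rparr>"

lemma rename_states_simps [simp]:
  "alph (rename_states h X) = alph X" "states (rename_states h X) = h ` states X"
  "init (rename_states h X) = h (init X)"
  by (simp_all add: rename_states_def)

context
  fixes h :: "'q \<Rightarrow> 'p" and X :: "('q, 's) tNCW"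
  assumes wf: "wf_tNCW X" and inj: "inj_on h (states X)"
begin

lemma trans_rename: "x \<in> states X \<Longrightarrow> trans (rename_states h X) (h x) \<sigma> = h ` trans X x \<sigma>"
  using inj by (simp add: rename_states_def)

lemma acc_rename:
  assumes "x \<in> states X" "y \<in> states X"
  shows "(h x, \<sigma>, h y) \<in> acc (rename_states h X) \<longleftrightarrow> (x, \<sigma>, y) \<in> acc X"
proof -
  have "x = x'" "y = y'" if "(x', \<sigma>, y') \<in> acc X" "h x = h x'" "h y = h y'" for x' y'
  proof -
    have "x' \<in> states X" "y' \<in> states X"
      using acc_in_Delta[OF wf that(1)] trans_subset_states[OF wf] by blast+
    then show "x = x'" "y = y'" using that(2,3) assms inj_onD[OF inj] by blast+
  qed
  then show ?thesis by (force simp: rename_states_def)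
qed

lemma wf_rename: "wf_tNCW (rename_states h X)"
proof -
  have "trans (rename_states h X) p \<sigma> \<noteq> {} \<and> trans (rename_states h X) p \<sigma> \<subseteq> h ` states X"
    if "p \<in> h ` states X" "\<sigma> \<in> alph X" for p \<sigma>
    using that trans_rename trans_nonempty[OF wf] trans_subset_states[OF wf] by fastforce
  moreover have "t \<in> Delta (rename_states h X)" if t_acc: "t \<in> acc (rename_states h X)" for t
  proof -
    obtain x \<sigma> y where t: "t = (h x, \<sigma>, h y)" "(x, \<sigma>, y) \<in> acc X"
      using t_acc by (auto simp: rename_states_def)
    then have "x \<in> states X" "\<sigma> \<in> alph X" "y \<in> trans X x \<sigma>"
      using acc_in_Delta[OF wf] by blast+
    then show ?thesis using t trans_rename by (auto simp: Delta_def)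
  qed
  ultimately show ?thesis using wf unfolding wf_tNCW_def by auto
qed

lemma is_run_rename:
  assumes "q \<in> states X" "is_word X w" "is_run (rename_states h X) (h q) w r'"
  obtains r where "is_run X q w r" "r' = h \<circ> r" "\<And>i. r i \<in> states X"
proof -
  let ?r = "\<lambda>i. inv_into (states X) h (r' i)"
  have "r' i \<in> h ` states X" for i
    using run_in_states[OF wf_rename _ assms(3)] assms(1,2) by (simp add: is_word_def)
  then have r': "r' i = h (?r i)" "?r i \<in> states X" for i
    by (simp_all add: f_inv_into_f inv_into_into)
  have "?r (Suc i) \<in> trans X (?r i) (w i)" for i
  proof -
    have "trans (rename_states h X) (r' i) (w i) = h ` trans X (?r i) (w i)"
      using trans_rename[OF r'(2)[of i], of "w i"] by (simp only: r'(1)[of i, symmetric])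
    moreover have "r' (Suc i) \<in> trans (rename_states h X) (r' i) (w i)"
      using assms(3) by (simp add: is_run_def)
    ultimately have "h (?r (Suc i)) \<in> h ` trans X (?r i) (w i)"
      unfolding r'(1)[of "Suc i", symmetric] by simp
    moreover have "trans X (?r i) (w i) \<subseteq> states X"
      using trans_subset_states[OF wf r'(2)] assms(2) by (simp add: is_word_def)
    ultimately show ?thesis using inj_on_image_mem_iff[OF inj r'(2)] by blast
  qed
  moreover have "?r 0 = q"
    using assms(3) inv_into_f_f[OF inj assms(1)] by (simp add: is_run_def)
  ultimately have "is_run X q w ?r" by (simp add: is_run_def)
  moreover have "r' = h \<circ> ?r" by (rule ext) (simp only: comp_apply, rule r'(1))
  ultimately show thesis using that r'(2) by blast
qed

lemma accepting_rename:
  "(\<And>i. r i \<in> states X) \<Longrightarrow> accepting (rename_states h X) w (h \<circ> r) \<longleftrightarrow> accepting X w r"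
  by (simp add: accepting_def acc_rename)

lemma lang_from_rename:
  assumes "q \<in> states X"
  shows "lang_from (rename_states h X) (h q) = lang_from X q"
proof (intro set_eqI iffI)
  fix w assume "w \<in> lang_from (rename_states h X) (h q)"
  then obtain r' where w: "is_word X w" and "is_run (rename_states h X) (h q) w r'"
    and "accepting (rename_states h X) w r'"
    by (auto simp: lang_from_def is_word_def)
  moreover obtain r where "is_run X q w r" "r' = h \<circ> r" "\<And>i. r i \<in> states X"
    using is_run_rename[OF assms w] calculation(2) by blast
  ultimately show "w \<in> lang_from X q"
    using accepting_rename by (auto simp: lang_from_def)
next
  fix w assume "w \<in> lang_from X q"
  then obtain r where w: "is_word X w" and r: "is_run X q w r" "accepting X w r"
    by (auto simp: lang_from_def)
  have "r i \<in> states X" for i using run_in_states[OF wf w r(1) assms] .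
  then have "is_run (rename_states h X) (h q) w (h \<circ> r)" "accepting (rename_states h X) w (h \<circ> r)"
    using r trans_rename accepting_rename by (auto simp: is_run_def)
  then show "w \<in> lang_from (rename_states h X) (h q)"
    using w by (auto simp: lang_from_def is_word_def)
qed

lemma GFG_rename:
  assumes "GFG_tNCW X"
  shows "GFG_tNCW (rename_states h X)"
proof -
  obtain f where f: "f [] = init X" "strategy X f"
    "\<forall>w \<in> lang_from X (init X). accepting X w (\<lambda>i. f (prefix i w))"
    using assms by (auto simp: GFG_tNCW_def GFG_def GFG_state_iff)
  have init: "init X \<in> states X" using wf by (simp add: wf_tNCW_def)
  have "strategy (rename_states h X) (h \<circ> f)"
    unfolding strategy_def
  proof (intro allI impI)
    fix u \<sigma> assume "set u \<subseteq> alph (rename_states h X) \<and> \<sigma> \<in> alph (rename_states h X)"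
    then have "(f u, \<sigma>, f (u @ [\<sigma>])) \<in> Delta X" using f(2) by (simp add: strategy_def)
    then show "((h \<circ> f) u, \<sigma>, (h \<circ> f) (u @ [\<sigma>])) \<in> Delta (rename_states h X)"
      using trans_rename by (auto simp: Delta_def)
  qed
  moreover have "accepting (rename_states h X) w (\<lambda>i. (h \<circ> f) (prefix i w))"
    if "w \<in> lang_from (rename_states h X) (init (rename_states h X))" for w
  proof -
    have w: "w \<in> lang_from X (init X)" using that lang_from_rename[OF init] by simp
    then have "is_word X w" by (simp add: lang_from_def)
    then have "f (prefix i w) \<in> states X" for i
      using run_in_states[OF wf _ strategy_run[OF f(2)]] init f(1) by simp
    then show ?thesis
      using accepting_rename[of "\<lambda>i. f (prefix i w)" w] f(3) w by (simp add: comp_def)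
  qed
  ultimately show ?thesis
    using wf_rename f(1) unfolding GFG_tNCW_def GFG_def GFG_state_iff
    by (intro conjI exI[of _ "h \<circ> f"]) simp_all
qed

end

(* Needed because minimal_GFG only compares with automata whose states are natural numbers. *)
lemma exists_nat_renaming:
  fixes X :: "('q, 's) tNCW"
  assumes "GFG_tNCW X"
  shows "\<exists>X' :: (nat, 's) tNCW. GFG_tNCW X' \<and> alph X' = alph X \<and> lang X' = lang X
    \<and> card (states X') = card (states X)"
proof -
  have wf: "wf_tNCW X" using assms by (simp add: GFG_tNCW_def)
  then obtain h :: "'q \<Rightarrow> nat" where inj: "inj_on h (states X)"
    using finite_imp_inj_to_nat_seg by (metis wf_tNCW_def)
  have "init X \<in> states X" using wf by (simp add: wf_tNCW_def)
  then show ?thesis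
    using GFG_rename[OF wf inj assms] lang_from_rename[OF wf inj] card_image[OF inj]
    by (intro exI[of _ "rename_states h X"]) (simp add: lang_def)
qed

lemma minimal_GFG_card_le:
  assumes "minimal_GFG A" "GFG_tNCW C" "alph C = alph A" "lang C = lang A"
  shows "card (states A) \<le> card (states C)"
  using exists_nat_renaming[OF assms(2)] assms unfolding minimal_GFG_def by metis

lemma (in reduction) minimal_card_le:
  assumes "minimal_GFG A"
  shows "card (states A) \<le> card Q"
  using minimal_GFG_card_le[OF assms GFG_tNCW_reduced _ lang_reduced] by simp

section \<open>Consequences of minimality\<close>

definition maximal_state :: "('q, 's) tNCW \<Rightarrow> 'q \<Rightarrow> bool" where
  "maximal_state A m \<longleftrightarrow> m \<in> states A \<and> (\<forall>m' \<in> states A. subsafe A m A m' \<longrightarrow> subsafe A m' A m)"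

lemma exists_maximal_state:
  assumes "finite (states A)" "a \<in> states A"
  obtains m where "maximal_state A m" "subsafe A a A m"
proof -
  let ?up = "{m \<in> states A. subsafe A a A m}"
  let ?down = "\<lambda>m. {x \<in> states A. subsafe A x A m}"
  have fin: "finite (?down ` ?up)" and ne: "?down ` ?up \<noteq> {}"
    using assms subsafe_refl[of A a] by auto
  obtain M where M: "M \<in> ?down ` ?up" "\<forall>M' \<in> ?down ` ?up. M \<subseteq> M' \<longrightarrow> M = M'"
    using finite_has_maximal[OF fin ne] by (elim bexE)
  then obtain m where m: "m \<in> ?up" "M = ?down m" by blast
  have "subsafe A m' A m" if "m' \<in> states A" "subsafe A m A m'" for m'
  proof -
    have "m' \<in> ?up" using m(1) that subsafe_trans[of A a A m A m'] by auto
    moreover have "?down m \<subseteq> ?down m'" using that(2) subsafe_trans[of A _ A m A m'] by auto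
    ultimately have "?down m' = ?down m" using M m(2) by blast
    then show ?thesis using that(1) subsafe_refl[of A m'] by blast
  qed
  then show thesis using that m(1) by (auto simp: maximal_state_def)
qed

definition maximal_part :: "('q, 's) tNCW \<Rightarrow> 'q set" where
  "maximal_part A = {p \<in> states A. \<exists>m. maximal_state A m \<and> (m, p) \<in> (safe_edges A)\<^sup>*}"

definition representative :: "('q, 's) tNCW \<Rightarrow> 'q \<Rightarrow> 'q" where
  "representative A x = (SOME y. y \<in> maximal_part A \<and> strongly_equiv A x A y)"

definition maximal_representative :: "('q, 's) tNCW \<Rightarrow> 'q \<Rightarrow> 'q" where
  "maximal_representative A a = representative A (SOME m. maximal_state A m \<and> subsafe A a A m)"

lemma representative_in_maximal_part:
  "x \<in> maximal_part A \<Longrightarrow>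
    representative A x \<in> maximal_part A \<and> strongly_equiv A x A (representative A x)"
  unfolding representative_def
  by (rule someI[of "\<lambda>y. y \<in> maximal_part A \<and> strongly_equiv A x A y" x])
    (simp add: strongly_equiv_refl)

lemma maximal_part_safe_closed:
  assumes "wf_tNCW A" "x \<in> maximal_part A" "\<sigma> \<in> alph A" "x' \<in> delta_safe A x \<sigma>"
  shows "x' \<in> maximal_part A"
proof -
  have "x \<in> states A" using assms(2) by (simp add: maximal_part_def)
  then have "(x, x') \<in> safe_edges A" "x' \<in> states A"
    using assms(3,4) trans_subset_states[OF assms(1) _ assms(3)] delta_safe_imp_trans[OF assms(4)]
    by (auto simp: safe_edges_def)
  then show ?thesis using assms(2) by (auto simp: maximal_part_def intro: rtrancl_into_rtrancl)
qed

lemma maximal_representative_dominates: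
  assumes "wf_tNCW A" "a \<in> states A"
  shows "maximal_representative A a \<in> representative A ` maximal_part A"
    and "subsafe A a A (maximal_representative A a)"
proof -
  let ?m = "SOME m. maximal_state A m \<and> subsafe A a A m"
  obtain m where "maximal_state A m" "subsafe A a A m"
    using exists_maximal_state[OF _ assms(2)] assms(1) by (auto simp: wf_tNCW_def)
  then have m: "maximal_state A ?m" "subsafe A a A ?m"
    by (metis (mono_tags, lifting) someI)+
  then have "?m \<in> maximal_part A" by (auto simp: maximal_part_def maximal_state_def)
  then show "maximal_representative A a \<in> representative A ` maximal_part A"
    by (simp add: maximal_representative_def)
  have "subsafe A ?m A (representative A ?m)"
    using representative_in_maximal_part[OF \<open>?m \<in> maximal_part A\<close>]
    by (simp add: strongly_equiv_iff_subsafe)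
  then show "subsafe A a A (maximal_representative A a)"
    using subsafe_trans[OF m(2)] by (simp add: maximal_representative_def)
qed

lemma reduction_maximal_part:
  assumes "normalized A" "f [] = init A" "strategy A f"
    and "\<And>w. w \<in> lang A \<Longrightarrow> accepting A w (\<lambda>i. f (prefix i w))"
  shows "reduction A (representative A ` maximal_part A) (representative A)
    (maximal_representative A) f"
proof
  have wf: "wf_tNCW A" using assms(1) by (simp add: normalized_def)
  have rep_Q: "representative A ` maximal_part A \<subseteq> maximal_part A"
    using representative_in_maximal_part[of _ A] by blast
  then show "representative A ` maximal_part A \<subseteq> states A"
    by (auto simp: maximal_part_def)
  show "representative A x' \<in> representative A ` maximal_part A
      \<and> strongly_equiv A x' A (representative A x')"
    if "x \<in> representative A ` maximal_part A" "\<sigma> \<in> alph A" "x' \<in> delta_safe A x \<sigma>" for x \<sigma> x'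
  proof -
    have "x' \<in> maximal_part A"
      using maximal_part_safe_closed[OF wf _ that(2,3)] that(1) rep_Q by blast
    then show ?thesis using representative_in_maximal_part[of x' A] by blast
  qed
  show "maximal_representative A a \<in> representative A ` maximal_part A
      \<and> subsafe A a A (maximal_representative A a)"
    if "a \<in> states A" for a
    using maximal_representative_dominates[OF wf that] by blast
qed (use assms in simp_all)

(* By minimality, the reduction to representatives of the maximal part loses no states. *)
lemma minimal_GFG_structure:
  assumes A: "normalized A" "GFG_tNCW A" "minimal_GFG A"
  shows "\<forall>p\<in>states A. \<exists>m. maximal_state A m \<and> (m, p) \<in> (safe_edges A)\<^sup>*"
    and "\<forall>x\<in>states A. \<forall>y\<in>states A. strongly_equiv A x A y \<longrightarrow> x = y"
proof -
  let ?Q = "maximal_part A" and ?rep = "representative A"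
  obtain f where "f [] = init A" "strategy A f"
    "\<And>w. w \<in> lang A \<Longrightarrow> accepting A w (\<lambda>i. f (prefix i w))"
    using A(2) by (auto simp: GFG_tNCW_def GFG_def GFG_state_iff lang_def)
  then interpret R: reduction A "?rep ` ?Q" ?rep "maximal_representative A" f
    by (rule reduction_maximal_part[OF A(1)])
  have finA: "finite (states A)" using R.wf_A by (simp add: wf_tNCW_def)
  have Q_states: "?Q \<subseteq> states A" by (auto simp: maximal_part_def)
  then have finQ: "finite ?Q" using finA finite_subset by blast
  have "card (states A) \<le> card (?rep ` ?Q)" by (rule R.minimal_card_le[OF A(3)])
  moreover have "card (?rep ` ?Q) \<le> card ?Q" by (rule card_image_le[OF finQ])
  moreover have "card ?Q \<le> card (states A)" by (rule card_mono[OF finA Q_states])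
  ultimately have "card ?Q = card (states A)" "card (?rep ` ?Q) = card ?Q" by simp_all
  then have Q: "?Q = states A" and inj: "inj_on ?rep ?Q"
    using card_subset_eq[OF finA Q_states] eq_card_imp_inj_on[OF finQ] by auto
  then show "\<forall>p\<in>states A. \<exists>m. maximal_state A m \<and> (m, p) \<in> (safe_edges A)\<^sup>*"
    by (auto simp: maximal_part_def)
  show "\<forall>x\<in>states A. \<forall>y\<in>states A. strongly_equiv A x A y \<longrightarrow> x = y"
  proof (intro ballI impI)
    fix x y assume "x \<in> states A" "y \<in> states A" "strongly_equiv A x A y"
    moreover from this have "?rep x = ?rep y"
      by (simp add: representative_def strongly_equiv_def)
    ultimately show "x = y" using inj Q by (auto dest: inj_onD)
  qed
qed

section \<open>Minimal automata are safe isomorphic\<close>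

(* A maximal state m is subsafe to some q of Y, which is subsafe to a state of X above m;
   maximality closes the cycle, and strong equivalence then propagates along safe paths. *)
lemma exists_strongly_equiv_state:
  assumes X: "normalized X" "all_reachable X" "GFG_tNCW X"
    and Y: "normalized Y" "all_reachable Y" "GFG_tNCW Y"
    and XY: "alph X = alph Y" "lang X = lang Y"
    and from_maximal: "\<forall>p\<in>states X. \<exists>m. maximal_state X m \<and> (m, p) \<in> (safe_edges X)\<^sup>*"
    and p: "p \<in> states X"
  shows "\<exists>q\<in>states Y. strongly_equiv X p Y q"
proof -
  have sdX: "safe_deterministic X" "sem_deterministic X"
    and sdY: "safe_deterministic Y" "sem_deterministic Y"
    using X(1) Y(1) by (simp_all add: normalized_def)
  have wfY: "wf_tNCW Y" using Y(1) by (simp add: normalized_def)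
  obtain m where m: "maximal_state X m" "(m, p) \<in> (safe_edges X)\<^sup>*" using from_maximal p by blast
  then have mX: "m \<in> states X" by (simp add: maximal_state_def)
  obtain q where q: "q \<in> states Y" "subsafe X m Y q"
    using exists_subsafe_state[OF X(1,2) mX Y(3) sdY XY] by blast
  obtain m' where m': "m' \<in> states X" "subsafe Y q X m'"
    using exists_subsafe_state[OF Y(1,2) q(1) X(3) sdX XY[symmetric]] by blast
  have "subsafe X m' X m"
    using m(1) m'(1) subsafe_trans[OF q(2) m'(2)] by (simp add: maximal_state_def)
  then have "strongly_equiv X m Y q"
    using q(2) subsafe_trans[OF m'(2)] by (simp add: strongly_equiv_iff_subsafe)
  show ?thesis
    using m(2)
  proof (induction rule: rtrancl_induct)
    case base show ?case using q(1) \<open>strongly_equiv X m Y q\<close> by blast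
  next
    case (step x x')
    then obtain y where y: "y \<in> states Y" "strongly_equiv X x Y y" by blast
    obtain \<sigma> where x: "x \<in> states X" "\<sigma> \<in> alph X" "x' \<in> delta_safe X x \<sigma>"
      using step.hyps(2) by (auto simp: safe_edges_def)
    obtain y' where y': "y' \<in> delta_safe Y y \<sigma>" "strongly_equiv X x' Y y'"
      using strongly_equiv_step[OF X(1) x(1) Y(1) y(1) XY(1) y(2) x(2,3)] by blast
    have "y' \<in> states Y"
      using trans_subset_states[OF wfY y(1)] x(2) XY(1) delta_safe_imp_trans[OF y'(1)] by blast
    then show ?case using y'(2) by blast
  qed
qed

lemma bij_betw_of_relation:
  assumes "\<forall>x\<in>S. \<exists>y\<in>T. R x y" "\<forall>y\<in>T. \<exists>x\<in>S. R x y"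
    and "\<And>x x' y. x \<in> S \<Longrightarrow> x' \<in> S \<Longrightarrow> y \<in> T \<Longrightarrow> R x y \<Longrightarrow> R x' y \<Longrightarrow> x = x'"
    and "\<And>x y y'. x \<in> S \<Longrightarrow> y \<in> T \<Longrightarrow> y' \<in> T \<Longrightarrow> R x y \<Longrightarrow> R x y' \<Longrightarrow> y = y'"
  obtains \<kappa> where "bij_betw \<kappa> S T" "\<And>x. x \<in> S \<Longrightarrow> R x (\<kappa> x)"
proof -
  define \<kappa> where "\<kappa> x = (SOME y. y \<in> T \<and> R x y)" for x
  have \<kappa>: "\<kappa> x \<in> T \<and> R x (\<kappa> x)" if "x \<in> S" for x
    unfolding \<kappa>_def using assms(1) that by (metis (mono_tags, lifting) someI)
  have "inj_on \<kappa> S"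
    using \<kappa> assms(3) by (metis inj_onI)
  moreover have "T \<subseteq> \<kappa> ` S"
  proof
    fix y assume "y \<in> T"
    then obtain x where "x \<in> S" "R x y" using assms(2) by blast
    then show "y \<in> \<kappa> ` S" using \<kappa> assms(4) \<open>y \<in> T\<close> by blast
  qed
  ultimately show thesis using that \<kappa> by (auto simp: bij_betw_def)
qed

lemma safe_successor_transfer:
  assumes X: "normalized X" and Y: "normalized Y" and XY: "alph X = alph Y"
    and unique: "\<forall>x\<in>states Y. \<forall>y\<in>states Y. strongly_equiv Y x Y y \<longrightarrow> x = y"
    and p: "p \<in> states X" "p' \<in> states Y" "strongly_equiv X p Y p'"
    and q: "q' \<in> states Y" "strongly_equiv X q Y q'"
    and \<sigma>: "\<sigma> \<in> alph X" "q \<in> delta_safe X p \<sigma>"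
  shows "q' \<in> delta_safe Y p' \<sigma>"
proof -
  obtain c where c: "c \<in> delta_safe Y p' \<sigma>" "strongly_equiv X q Y c"
    using strongly_equiv_step[OF X p(1) Y p(2) XY p(3) \<sigma>] by blast
  have "c \<in> states Y"
    using Y trans_subset_states[OF _ p(2)] \<sigma>(1) XY delta_safe_imp_trans[OF c(1)]
    by (auto simp: normalized_def)
  moreover have "strongly_equiv Y q' Y c"
    using strongly_equiv_trans[OF strongly_equiv_sym[OF q(2)] c(2)] .
  ultimately show ?thesis using unique q(1) c(1) by blast
qed

lemma safe_isomorphic_if_strongly_equiv:
  assumes A: "normalized A" and B: "normalized B" and AB: "alph A = alph B"
    and partner_A: "\<forall>p\<in>states A. \<exists>q\<in>states B. strongly_equiv A p B q"
    and partner_B: "\<forall>q\<in>states B. \<exists>p\<in>states A. strongly_equiv B q A p"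
    and unique_A: "\<forall>x\<in>states A. \<forall>y\<in>states A. strongly_equiv A x A y \<longrightarrow> x = y"
    and unique_B: "\<forall>x\<in>states B. \<forall>y\<in>states B. strongly_equiv B x B y \<longrightarrow> x = y"
  shows "safe_isomorphic A B"
proof -
  obtain \<kappa> where \<kappa>: "bij_betw \<kappa> (states A) (states B)"
    "\<And>p. p \<in> states A \<Longrightarrow> strongly_equiv A p B (\<kappa> p)"
  proof (rule bij_betw_of_relation[of "states A" "states B" "\<lambda>p q. strongly_equiv A p B q"])
    show "\<forall>q\<in>states B. \<exists>p\<in>states A. strongly_equiv A p B q"
      using partner_B by (auto dest: strongly_equiv_sym)
    show "p = p'"
      if "p \<in> states A" "p' \<in> states A" "strongly_equiv A p B q" "strongly_equiv A p' B q"
      for p p' q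
      using unique_A that strongly_equiv_trans[OF that(3) strongly_equiv_sym[OF that(4)]] by blast
    show "q = q'"
      if "q \<in> states B" "q' \<in> states B" "strongly_equiv A p B q" "strongly_equiv A p B q'"
      for p q q'
      using unique_B that strongly_equiv_trans[OF strongly_equiv_sym[OF that(3)] that(4)] by blast
  qed (use partner_A in blast)+
  have "q' \<in> delta_safe A q \<sigma> \<longleftrightarrow> \<kappa> q' \<in> delta_safe B (\<kappa> q) \<sigma>"
    if q: "q \<in> states A" "q' \<in> states A" and \<sigma>: "\<sigma> \<in> alph A" for q q' \<sigma>
  proof
    have \<kappa>q: "\<kappa> q \<in> states B" "\<kappa> q' \<in> states B" using \<kappa>(1) q by (auto dest: bij_betw_apply)
    show "q' \<in> delta_safe A q \<sigma> \<Longrightarrow> \<kappa> q' \<in> delta_safe B (\<kappa> q) \<sigma>"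
      using safe_successor_transfer[OF A B AB unique_B q(1) \<kappa>q(1) \<kappa>(2)[OF q(1)]
          \<kappa>q(2) \<kappa>(2)[OF q(2)] \<sigma>] .
    show "\<kappa> q' \<in> delta_safe B (\<kappa> q) \<sigma> \<Longrightarrow> q' \<in> delta_safe A q \<sigma>"
      using safe_successor_transfer[OF B A AB[symmetric] unique_A \<kappa>q(1) q(1)
          strongly_equiv_sym[OF \<kappa>(2)[OF q(1)]] q(2) strongly_equiv_sym[OF \<kappa>(2)[OF q(2)]]]
        \<sigma> AB by simp
  qed
  then show ?thesis using \<kappa>(1) unfolding safe_isomorphic_def by blast
qed

theorem mainTheorem2:
  fixes A :: "('q, 's) tNCW" and B :: "('p, 's) tNCW"
  assumes "GFG_tNCW A" and "GFG_tNCW B"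
    and "alph A = alph B"
    and "nice A" and "nice B"
    and "lang A = lang B"
    and "minimal_GFG A" and "minimal_GFG B"
  shows "safe_isomorphic A B"
proof -
  have A: "normalized A" "all_reachable A" and B: "normalized B" "all_reachable B"
    using assms(1,2,4,5) by (simp_all add: nice_def normalized_def GFG_tNCW_def)
  note A_structure = minimal_GFG_structure[OF A(1) assms(1,7)]
  note B_structure = minimal_GFG_structure[OF B(1) assms(2,8)]
  show ?thesis
  proof (rule safe_isomorphic_if_strongly_equiv[OF A(1) B(1) assms(3) _ _ A_structure(2) B_structure(2)])
    show "\<forall>p\<in>states A. \<exists>q\<in>states B. strongly_equiv A p B q"
      using exists_strongly_equiv_state[OF A assms(1) B assms(2) assms(3,6) A_structure(1)] by blast
    show "\<forall>q\<in>states B. \<exists>p\<in>states A. strongly_equiv B q A p"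
      using exists_strongly_equiv_state[OF B assms(2) A assms(1) assms(3,6)[symmetric] B_structure(1)]
      by blast
  qed
qed

end
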